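(* Let $G=(V,E)$ be a simple, unoriented, locally finite graph with graph distance $d$, and let $x,x'$ be adjacent vertices with degrees $d_x=\delta$ and $d_{x'}=\delta'$. Let $N$ be a positive integer and $t=1/N$. Then there exists an optimal coupling $\xi^t$ between $\mu^t_x$ and $\mu^t_{x'}$ (i.e. one attaining $W_1(\mu^t_x,\mu^t_{x'})$) all of whose coefficients lie in $\frac{1}{N\delta\delta'}\mathbb{N}$. Consequently $\kappa^1(x,x')$ and $\operatorname{ric}(x,x')$ lie in $\frac{1}{\delta\delta'}\mathbb{Z}$.
   Context: For a vertex $x$, $S_x$ is the set of neighbours of $x$ and $d_x=|S_x|$; $d$ is the graph distance. The lazy random walk $\mu^t_x$ is the probability measure with $\mu^t_x(x)=1-t$, $\mu^t_x(y)=t/d_x$ for $y\in S_x$, and $0$ elsewhere. A coupling between probability measures $\mu,\mu'$ on $V$ is a nonnegative function $\xi$ on $V\times V$ with $\sum_{y'}\xi(y,y')=\mu(y)$ and $\sum_y\xi(y,y')=\mu'(y')$. $W_1(\mu,\mu')=\inf_\xi\sum_{y,y'}\xi(y,y')d(y,y')$ over all couplings. $\kappa^t(x,x')=1-W_1(\mu^t_x,\mu^t_{x'})/d(x,x')$ (so $\kappa^1$ uses the uniform measures on the neighbourhoods), and $\operatorname{ric}(x,x')=\liminf_{t\to0^+}\kappa^t(x,x')/t$. *)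

theory Defs
  imports "HOL-Analysis.Analysis" "HOL-Library.Extended_Real"
begin

text \<open>A simple unoriented graph on the vertex type 'a is given by an adjacency
  relation E (symmetric, irreflexive).\<close>

definition nbrs :: "('a \<Rightarrow> 'a \<Rightarrow> bool) \<Rightarrow> 'a \<Rightarrow> 'a set" where
  "nbrs E x = {y. E x y}"

definition deg :: "('a \<Rightarrow> 'a \<Rightarrow> bool) \<Rightarrow> 'a \<Rightarrow> nat" where
  "deg E x = card (nbrs E x)"

text \<open>Graph distance: length of a shortest walk (only used between vertices in the
  same connected component).\<close>
definition walk_len :: "('a \<Rightarrow> 'a \<Rightarrow> bool) \<Rightarrow> 'a \<Rightarrow> 'a \<Rightarrow> nat \<Rightarrow> bool" where
  "walk_len E x y n \<longleftrightarrow> (\<exists>p::nat \<Rightarrow> 'a. p 0 = x \<and> p n = y \<and> (\<forall>i<n. E (p i) (p (Suc i))))"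

definition gdist :: "('a \<Rightarrow> 'a \<Rightarrow> bool) \<Rightarrow> 'a \<Rightarrow> 'a \<Rightarrow> real" where
  "gdist E x y = real (LEAST n. walk_len E x y n)"

definition lazy_rw :: "('a \<Rightarrow> 'a \<Rightarrow> bool) \<Rightarrow> real \<Rightarrow> 'a \<Rightarrow> 'a \<Rightarrow> real" where
  "lazy_rw E t x y = (if y = x then 1 - t else if E x y then t / real (deg E x) else 0)"

definition is_coupling :: "('a \<Rightarrow> real) \<Rightarrow> ('a \<Rightarrow> real) \<Rightarrow> ('a \<times> 'a \<Rightarrow> real) \<Rightarrow> bool" where
  "is_coupling \<mu> \<mu>' \<xi> \<longleftrightarrow> (\<forall>p. \<xi> p \<ge> 0)
     \<and> (\<forall>y. ((\<lambda>y'. \<xi> (y, y')) has_sum \<mu> y) UNIV)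
     \<and> (\<forall>y'. ((\<lambda>y. \<xi> (y, y')) has_sum \<mu>' y') UNIV)"

definition coupling_cost :: "('a \<Rightarrow> 'a \<Rightarrow> bool) \<Rightarrow> ('a \<times> 'a \<Rightarrow> real) \<Rightarrow> real" where
  "coupling_cost E \<xi> = (\<Sum>\<^sub>\<infinity>(y, y')\<in>UNIV. \<xi> (y, y') * gdist E y y')"

definition W1 :: "('a \<Rightarrow> 'a \<Rightarrow> bool) \<Rightarrow> ('a \<Rightarrow> real) \<Rightarrow> ('a \<Rightarrow> real) \<Rightarrow> real" where
  "W1 E \<mu> \<mu>' = Inf {coupling_cost E \<xi> | \<xi>. is_coupling \<mu> \<mu>' \<xi>}"

definition optimal_coupling :: "('a \<Rightarrow> 'a \<Rightarrow> bool) \<Rightarrow> ('a \<Rightarrow> real) \<Rightarrow> ('a \<Rightarrow> real) \<Rightarrow> ('a \<times> 'a \<Rightarrow> real) \<Rightarrow> bool" where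
  "optimal_coupling E \<mu> \<mu>' \<xi> \<longleftrightarrow> is_coupling \<mu> \<mu>' \<xi> \<and> coupling_cost E \<xi> = W1 E \<mu> \<mu>'"

definition kappa :: "('a \<Rightarrow> 'a \<Rightarrow> bool) \<Rightarrow> real \<Rightarrow> 'a \<Rightarrow> 'a \<Rightarrow> real" where
  "kappa E t x x' = 1 - W1 E (lazy_rw E t x) (lazy_rw E t x') / gdist E x x'"

text \<open>ric as an extended real (liminf may a priori be infinite).\<close>
definition ric :: "('a \<Rightarrow> 'a \<Rightarrow> bool) \<Rightarrow> 'a \<Rightarrow> 'a \<Rightarrow> ereal" where
  "ric E x x' = Liminf (at_right 0) (\<lambda>t. ereal (kappa E t x x' / t))"

end

theory Submission
  imports Defs
begin

text \<open>For \<open>t = 1/N\<close> both lazy random walk measures are supported on the finite set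
  \<open>{x, x'} \<union> nbrs E x \<union> nbrs E x'\<close> and take values in \<open>(1/M) \<nat>\<close>, \<open>M = N \<delta> \<delta>'\<close>. By
  integrality of the transportation polytope every coupling can be replaced by one with
  entries in \<open>(1/M) \<nat>\<close> and no larger cost: on the non-integral entries of \<open>M \<xi>\<close> every
  row and column that meets them meets them at least twice, which leaves room for a
  nonzero circulation, and moving along it in the cost-decreasing direction makes one
  more entry integral. The costs of such couplings lie in \<open>(1/M) \<nat>\<close>, so a cheapest one
  exists, and it is optimal. Hence \<open>\<kappa>\<^sup>t / t \<in> (1/(\<delta> \<delta>')) \<int>\<close> for \<open>t = 1/N\<close>, which gives
  the claim for \<open>\<kappa>\<^sup>1\<close>. Mixing a coupling with the Dirac mass at \<open>(x, x')\<close> shows that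
  \<open>\<kappa>\<^sup>t / t\<close> is antitone in \<open>t\<close>; being also bounded, its values at \<open>t = 1/N\<close> in the
  discrete set \<open>(1/(\<delta> \<delta>')) \<int>\<close> are eventually constant, and so is \<open>\<kappa>\<^sup>t / t\<close> as
  \<open>t \<rightarrow> 0\<^sup>+\<close>; this constant is \<open>ric(x, x')\<close>.\<close>

section \<open>Integral transport plans\<close>

lemma homogeneous_system_nontrivial_solution:
  fixes a :: "'j \<Rightarrow> 'v \<Rightarrow> real"
  assumes "finite J" "finite V" "card J < card V"
  shows "\<exists>D. (\<forall>v. v \<notin> V \<longrightarrow> D v = 0) \<and> (\<exists>v\<in>V. D v \<noteq> 0)
           \<and> (\<forall>j\<in>J. (\<Sum>v\<in>V. a j v * D v) = 0)"
  using assms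
proof (induction J arbitrary: V a rule: finite_induct)
  case empty
  then obtain v where "v \<in> V" by fastforce
  then show ?case by (intro exI[of _ "\<lambda>w. if w = v then 1 else 0"]) simp
next
  case (insert j J)
  show ?case
  proof (cases "\<forall>v\<in>V. a j v = 0")
    case True
    with insert show ?thesis by fastforce
  next
    case False
    then obtain v0 where v0: "v0 \<in> V" "a j v0 \<noteq> 0" by auto
    \<comment> \<open>Gaussian elimination: solve equation j for the unknown v0 and recurse on the others.\<close>
    define a' where "a' i v = a i v - a i v0 / a j v0 * a j v" for i v
    have "finite (V - {v0})" "card J < card (V - {v0})"
      using insert v0 by auto
    from insert.IH[OF this, of a'] obtain D' where D':
      "\<forall>v. v \<notin> V - {v0} \<longrightarrow> D' v = 0" "\<exists>v\<in>V - {v0}. D' v \<noteq> 0"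
      "\<forall>i\<in>J. (\<Sum>v\<in>V - {v0}. a' i v * D' v) = 0" by blast
    define X where "X = (\<Sum>v\<in>V - {v0}. a j v * D' v)"
    define D where "D = D'(v0 := - X / a j v0)"
    have sum_D: "(\<Sum>v\<in>V. a i v * D v) = (\<Sum>v\<in>V - {v0}. a i v * D' v) - a i v0 / a j v0 * X" for i
    proof -
      have "(\<Sum>v\<in>V. a i v * D v) = a i v0 * D v0 + (\<Sum>v\<in>V - {v0}. a i v * D v)"
        using insert.prems(1) v0(1) by (rule sum.remove)
      also have "(\<Sum>v\<in>V - {v0}. a i v * D v) = (\<Sum>v\<in>V - {v0}. a i v * D' v)"
        by (rule sum.cong) (auto simp: D_def)
      finally show ?thesis by (simp add: D_def)
    qed
    have "(\<Sum>v\<in>V. a i v * D v) = (\<Sum>v\<in>V - {v0}. a' i v * D' v)" for i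
      unfolding sum_D a'_def X_def
      by (simp add: algebra_simps sum_subtractf sum_distrib_left)
    moreover have "(\<Sum>v\<in>V. a j v * D v) = 0"
      using v0 by (simp add: sum_D X_def)
    ultimately show ?thesis
      using D' v0 by (intro exI[of _ D]) (auto simp: D_def)
  qed
qed

lemma two_mul_card_image_le_card:
  assumes "finite F" "\<And>r. r \<in> f ` F \<Longrightarrow> 2 \<le> card {e\<in>F. f e = r}"
  shows "2 * card (f ` F) \<le> card F"
proof -
  have "card F = (\<Sum>r\<in>f ` F. card {e\<in>F. f e = r})"
    using sum.group[OF assms(1) finite_imageI[OF assms(1)] subset_refl, where g=f and h="\<lambda>_. 1::nat"]
    by simp
  also have "\<dots> \<ge> (\<Sum>r\<in>f ` F. 2)"
    by (rule sum_mono) (use assms(2) in auto)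
  finally show ?thesis by simp
qed

lemma sum_Ints_nonint_term_not_alone:
  fixes f :: "'b \<Rightarrow> real"
  assumes "finite T" "sum f T \<in> \<int>" "c \<in> T" "f c \<notin> \<int>"
  shows "\<exists>c'\<in>T. c' \<noteq> c \<and> f c' \<notin> \<int>"
proof (rule ccontr)
  assume "\<not> ?thesis"
  then have "sum f (T - {c}) \<in> \<int>" by (intro Ints_sum) blast
  moreover have "f c = sum f T - sum f (T - {c})"
    using sum.remove[OF assms(1,3), of f] by simp
  ultimately show False using assms(2,4) by (metis Ints_diff)
qed

lemma card_fst_plus_card_snd_nonintegral_le:
  fixes A :: "'a \<times> 'b \<Rightarrow> real"
  assumes fin: "finite S" "finite T"
    and rows: "\<forall>r\<in>S. (\<Sum>c\<in>T. A (r,c)) \<in> \<int>" and cols: "\<forall>c\<in>T. (\<Sum>r\<in>S. A (r,c)) \<in> \<int>"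
    and F: "F = {e\<in>S\<times>T. A e \<notin> \<int>}"
  shows "card (fst ` F) + card (snd ` F) \<le> card F"
proof -
  have finF: "finite F" using fin F by simp
  have "2 \<le> card {e\<in>F. fst e = r}" if "r \<in> fst ` F" for r
  proof -
    obtain c where c: "(r,c) \<in> F" using \<open>r \<in> fst ` F\<close> by force
    then obtain c' where "c' \<in> T" "c' \<noteq> c" "A (r,c') \<notin> \<int>"
      using sum_Ints_nonint_term_not_alone[of T "\<lambda>c. A (r,c)" c] fin rows F by auto
    then have "{(r,c), (r,c')} \<subseteq> {e\<in>F. fst e = r}" using c F by auto
    from card_mono[OF _ this] show ?thesis using finF \<open>c' \<noteq> c\<close> by simp
  qed
  moreover have "2 \<le> card {e\<in>F. snd e = c}" if "c \<in> snd ` F" for c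
  proof -
    obtain r where r: "(r,c) \<in> F" using \<open>c \<in> snd ` F\<close> by force
    then obtain r' where "r' \<in> S" "r' \<noteq> r" "A (r',c) \<notin> \<int>"
      using sum_Ints_nonint_term_not_alone[of S "\<lambda>r. A (r,c)" r] fin cols F by auto
    then have "{(r,c), (r',c)} \<subseteq> {e\<in>F. snd e = c}" using r F by auto
    from card_mono[OF _ this] show ?thesis using finF \<open>r' \<noteq> r\<close> by simp
  qed
  ultimately show ?thesis
    using two_mul_card_image_le_card[OF finF, of fst] two_mul_card_image_le_card[OF finF, of snd]
    by simp
qed

lemma sum_row_eq_sum_supported:
  assumes "finite F" "finite T" "F \<subseteq> S \<times> T" "\<forall>e. e \<notin> F \<longrightarrow> D e = 0"
  shows "(\<Sum>c\<in>T. D (r,c)) = (\<Sum>e\<in>F. if fst e = r then D e else 0)"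
proof -
  have "(\<Sum>c\<in>T. D (r,c)) = (\<Sum>e\<in>Pair r ` T. D e)"
    by (simp add: sum.reindex inj_on_def)
  also have "\<dots> = (\<Sum>e\<in>F. if fst e = r then D e else 0)"
    using assms by (intro sum.mono_neutral_cong) (auto simp: image_iff)
  finally show ?thesis .
qed

lemma sum_col_eq_sum_supported:
  assumes "finite F" "finite S" "F \<subseteq> S \<times> T" "\<forall>e. e \<notin> F \<longrightarrow> D e = 0"
  shows "(\<Sum>r\<in>S. D (r,c)) = (\<Sum>e\<in>F. if snd e = c then D e else 0)"
proof -
  have "(\<Sum>r\<in>S. D (r,c)) = (\<Sum>e\<in>(\<lambda>r. (r,c)) ` S. D e)"
    by (simp add: sum.reindex inj_on_def)
  also have "\<dots> = (\<Sum>e\<in>F. if snd e = c then D e else 0)"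
    using assms by (intro sum.mono_neutral_cong) (auto simp: image_iff)
  finally show ?thesis .
qed

lemma col_sum_zero_if_rows_and_other_cols_zero:
  fixes D :: "'a \<times> 'b \<Rightarrow> real"
  assumes "finite S" "finite T" "c0 \<in> T"
    and "\<forall>r\<in>S. (\<Sum>c\<in>T. D (r,c)) = 0" "\<forall>c\<in>T - {c0}. (\<Sum>r\<in>S. D (r,c)) = 0"
  shows "(\<Sum>r\<in>S. D (r,c0)) = 0"
proof -
  have "(\<Sum>r\<in>S. D (r,c0)) + (\<Sum>c\<in>T - {c0}. \<Sum>r\<in>S. D (r,c)) = (\<Sum>c\<in>T. \<Sum>r\<in>S. D (r,c))"
    using sum.remove[OF assms(2,3), of "\<lambda>c. \<Sum>r\<in>S. D (r,c)"] by simp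
  also have "\<dots> = (\<Sum>r\<in>S. \<Sum>c\<in>T. D (r,c))" by (rule sum.swap)
  finally show ?thesis using assms(4,5) by simp
qed

lemma margins_zero_if_fibre_sums_zero:
  fixes D :: "'a \<times> 'b \<Rightarrow> real"
  assumes fin: "finite F" "finite S" "finite T" and FST: "F \<subseteq> S \<times> T" and D: "\<forall>e. e \<notin> F \<longrightarrow> D e = 0"
    and c0: "c0 \<in> snd ` F"
    and rows: "\<forall>r\<in>fst ` F. (\<Sum>e\<in>F. if fst e = r then D e else 0) = 0"
    and cols: "\<forall>c\<in>snd ` F - {c0}. (\<Sum>e\<in>F. if snd e = c then D e else 0) = 0"
  shows "\<forall>r\<in>S. (\<Sum>c\<in>T. D (r,c)) = 0" "\<forall>c\<in>T. (\<Sum>r\<in>S. D (r,c)) = 0"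
proof -
  have "(\<Sum>e\<in>F. if fst e = r then D e else 0) = 0" if "r \<notin> fst ` F" for r
    using that by (intro sum.neutral) force
  with rows show rows0: "\<forall>r\<in>S. (\<Sum>c\<in>T. D (r,c)) = 0"
    using sum_row_eq_sum_supported[OF fin(1,3) FST D] by metis
  have "(\<Sum>e\<in>F. if snd e = c then D e else 0) = 0" if "c \<notin> snd ` F" for c
    using that by (intro sum.neutral) force
  with cols have "\<forall>c\<in>T - {c0}. (\<Sum>r\<in>S. D (r,c)) = 0"
    using sum_col_eq_sum_supported[OF fin(1,2) FST D] by (metis Diff_iff)
  moreover have "c0 \<in> T" using c0 FST by auto
  ultimately show "\<forall>c\<in>T. (\<Sum>r\<in>S. D (r,c)) = 0"
    using col_sum_zero_if_rows_and_other_cols_zero[OF fin(2,3) _ rows0] by (metis Diff_iff empty_iff insert_iff)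
qed

text \<open>By the counting lemma there are more unknowns (the entries in \<open>F\<close>) than
  constraints (one per row and column meeting \<open>F\<close>, less one redundant column).\<close>
lemma nonintegral_circulation_exists:
  fixes A :: "'a \<times> 'b \<Rightarrow> real"
  assumes fin: "finite S" "finite T"
    and rows: "\<forall>r\<in>S. (\<Sum>c\<in>T. A (r,c)) \<in> \<int>" and cols: "\<forall>c\<in>T. (\<Sum>r\<in>S. A (r,c)) \<in> \<int>"
    and F: "F = {e\<in>S\<times>T. A e \<notin> \<int>}" and "F \<noteq> {}"
  obtains D :: "'a \<times> 'b \<Rightarrow> real"
  where "\<forall>e. e \<notin> F \<longrightarrow> D e = 0" "\<exists>e\<in>F. D e \<noteq> 0"
    "\<forall>r\<in>S. (\<Sum>c\<in>T. D (r,c)) = 0" "\<forall>c\<in>T. (\<Sum>r\<in>S. D (r,c)) = 0"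
proof -
  have finF: "finite F" and FST: "F \<subseteq> S \<times> T" using fin F by auto
  obtain c0 where c0: "c0 \<in> snd ` F" using \<open>F \<noteq> {}\<close> by auto
  define J where "J = Inl ` fst ` F \<union> Inr ` (snd ` F - {c0})"
  define a :: "'a + 'b \<Rightarrow> 'a \<times> 'b \<Rightarrow> real"
    where "a = case_sum (\<lambda>r e. if fst e = r then 1 else 0) (\<lambda>c e. if snd e = c then 1 else (0::real))"
  have "card J \<le> card (fst ` F) + card (snd ` F - {c0})"
    unfolding J_def by (rule order.trans[OF card_Un_le]) (simp add: card_image)
  also have "\<dots> < card F"
  proof -
    have "card (snd ` F) > 0" using c0 finF by (auto simp: card_gt_0_iff)
    then show ?thesis using card_fst_plus_card_snd_nonintegral_le[OF fin rows cols F] c0 by simp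
  qed
  finally obtain D where D: "\<forall>v. v \<notin> F \<longrightarrow> D v = 0" "\<exists>v\<in>F. D v \<noteq> 0"
    "\<forall>j\<in>J. (\<Sum>v\<in>F. a j v * D v) = 0"
    using homogeneous_system_nontrivial_solution[of J F a] finF J_def by blast
  have "(\<Sum>e\<in>F. if fst e = r then D e else 0) = (\<Sum>v\<in>F. a (Inl r) v * D v)" for r
    by (rule sum.cong) (simp_all add: a_def)
  moreover have "(\<Sum>e\<in>F. if snd e = c then D e else 0) = (\<Sum>v\<in>F. a (Inr c) v * D v)" for c
    by (rule sum.cong) (simp_all add: a_def)
  ultimately have "\<forall>r\<in>fst ` F. (\<Sum>e\<in>F. if fst e = r then D e else 0) = 0"
    "\<forall>c\<in>snd ` F - {c0}. (\<Sum>e\<in>F. if snd e = c then D e else 0) = 0"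
    using D(3) unfolding J_def by simp_all
  from margins_zero_if_fibre_sums_zero[OF finF fin FST D(1) c0 this]
  show ?thesis by (rule that[OF D(1,2)])
qed

lemma of_int_floor_less_nonint:
  fixes a :: real
  assumes "a \<notin> \<int>"
  shows "of_int \<lfloor>a\<rfloor> < a" "a < of_int \<lceil>a\<rceil>"
proof -
  have "of_int \<lfloor>a\<rfloor> \<noteq> a" "of_int \<lceil>a\<rceil> \<noteq> a" using assms by (metis Ints_of_int)+
  then show "of_int \<lfloor>a\<rfloor> < a" "a < of_int \<lceil>a\<rceil>"
    using of_int_floor_le[of a] le_of_int_ceiling[of a] by linarith+
qed

lemma Ints_nonneg_imp_of_nat:
  fixes a :: real
  assumes "a \<in> \<int>" "a \<ge> 0"
  shows "\<exists>k::nat. a = real k"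
proof -
  obtain i where "a = of_int i" using assms(1) by (auto elim: Ints_cases)
  with assms(2) show ?thesis by (intro exI[of _ "nat i"]) simp
qed

text \<open>Step along \<open>D\<close> until the first entry of \<open>A\<close> becomes integral; until then no
  entry that decreases along \<open>D\<close> passes its floor.\<close>
lemma exists_step_to_integer:
  fixes A D :: "'e \<Rightarrow> real"
  assumes "finite P" "P \<noteq> {}" and P: "\<forall>e\<in>P. A e \<notin> \<int> \<and> D e \<noteq> 0"
  shows "\<exists>s>0. (\<forall>e\<in>P. of_int \<lfloor>A e\<rfloor> \<le> A e + s * D e) \<and> (\<exists>e\<in>P. A e + s * D e \<in> \<int>)"
proof -
  define g where "g e = (if D e > 0 then (of_int \<lceil>A e\<rceil> - A e) / D e
                         else (A e - of_int \<lfloor>A e\<rfloor>) / (- D e))" for e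
  define s where "s = Min (g ` P)"
  have "s \<in> g ` P" unfolding s_def using assms(1,2) by (intro Min_in) auto
  then obtain e0 where e0: "e0 \<in> P" "g e0 = s" by auto
  have "g e > 0" if "e \<in> P" for e
    using P that of_int_floor_less_nonint[of "A e"] by (auto simp: g_def field_simps)
  then have "s > 0" using e0 by auto
  moreover have "of_int \<lfloor>A e\<rfloor> \<le> A e + s * D e" if e: "e \<in> P" for e
  proof (cases "D e < 0")
    case True
    have "s \<le> g e" using assms(1) e unfolding s_def by simp
    moreover have "g e = (A e - of_int \<lfloor>A e\<rfloor>) / (- D e)" using True by (simp add: g_def)
    moreover have "- D e > 0" using True by simp
    ultimately have "s * (- D e) \<le> A e - of_int \<lfloor>A e\<rfloor>"
      using pos_le_divide_eq by metis
    then show ?thesis by simp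
  next
    case False
    then have "0 \<le> s * D e" using \<open>s > 0\<close> by simp
    then show ?thesis using of_int_floor_le[of "A e"] by linarith
  qed
  moreover have "A e0 + s * D e0 \<in> \<int>"
  proof (cases "D e0 > 0")
    case True
    then have "A e0 + s * D e0 = of_int \<lceil>A e0\<rceil>" using e0(2)[symmetric] by (simp add: g_def)
    then show ?thesis by simp
  next
    case False
    then have "A e0 + s * D e0 = of_int \<lfloor>A e0\<rfloor>" using e0(1) e0(2)[symmetric] P by (simp add: g_def)
    then show ?thesis by simp
  qed
  ultimately show ?thesis using e0(1) by blast
qed

lemma perturbed_nonintegral_entries_psubset:
  fixes A D :: "'e \<Rightarrow> real"
  assumes "\<forall>e. e \<notin> F \<longrightarrow> D e = 0" "F = {e\<in>U. A e \<notin> \<int>}" "e0 \<in> F" "A e0 + s * D e0 \<in> \<int>"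
  shows "{e\<in>U. A e + s * D e \<notin> \<int>} \<subset> F"
proof -
  have "e \<in> F - {e0}" if "e \<in> U" "A e + s * D e \<notin> \<int>" for e
  proof -
    have "e \<noteq> e0" using that(2) assms(4) by auto
    moreover have "e \<in> F"
    proof (rule ccontr)
      assume "e \<notin> F"
      then have "D e = 0" using assms(1) by blast
      then show False using that assms(2) \<open>e \<notin> F\<close> by simp
    qed
    ultimately show ?thesis by simp
  qed
  then show ?thesis using assms(3) by blast
qed

lemma transport_plan_fewer_nonintegral_entries:
  fixes A D w :: "'a \<times> 'b \<Rightarrow> real"
  assumes fin: "finite S" "finite T"
    and nonneg: "\<forall>e. A e \<ge> 0" and supp: "\<forall>e. e \<notin> S\<times>T \<longrightarrow> A e = 0"
    and F: "F = {e\<in>S\<times>T. A e \<notin> \<int>}"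
    and D: "\<forall>e. e \<notin> F \<longrightarrow> D e = 0" "\<exists>e\<in>F. D e \<noteq> 0"
      "\<forall>r\<in>S. (\<Sum>c\<in>T. D (r,c)) = 0" "\<forall>c\<in>T. (\<Sum>r\<in>S. D (r,c)) = 0"
    and cost: "(\<Sum>e\<in>S\<times>T. D e * w e) \<le> 0"
  obtains A' :: "'a \<times> 'b \<Rightarrow> real"
  where "\<forall>e. A' e \<ge> 0" "\<forall>e. e \<notin> S\<times>T \<longrightarrow> A' e = 0"
    "\<forall>r\<in>S. (\<Sum>c\<in>T. A' (r,c)) = (\<Sum>c\<in>T. A (r,c))"
    "\<forall>c\<in>T. (\<Sum>r\<in>S. A' (r,c)) = (\<Sum>r\<in>S. A (r,c))"
    "(\<Sum>e\<in>S\<times>T. A' e * w e) \<le> (\<Sum>e\<in>S\<times>T. A e * w e)"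
    "{e\<in>S\<times>T. A' e \<notin> \<int>} \<subset> F"
proof -
  define P where "P = {e\<in>F. D e \<noteq> 0}"
  have "finite P" "P \<noteq> {}" "\<forall>e\<in>P. A e \<notin> \<int> \<and> D e \<noteq> 0"
    using fin F D(2) by (auto simp: P_def)
  then obtain s e0 where s: "s > 0" "\<forall>e\<in>P. of_int \<lfloor>A e\<rfloor> \<le> A e + s * D e"
    and e0: "e0 \<in> P" "A e0 + s * D e0 \<in> \<int>"
    using exists_step_to_integer[of P A D] by blast
  define A' where "A' e = A e + s * D e" for e
  have D0: "D e = 0" if "e \<notin> P" for e using D(1) that unfolding P_def by blast
  have nonneg': "\<forall>e. A' e \<ge> 0"
  proof
    fix e show "A' e \<ge> 0"
    proof (cases "e \<in> P")
      case True
      have "(0::real) \<le> of_int \<lfloor>A e\<rfloor>" using nonneg[rule_format, of e] by simp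
      also have "\<dots> \<le> A' e" using s(2) True by (simp add: A'_def)
      finally show ?thesis .
    qed (use nonneg[rule_format, of e] D0 in \<open>simp add: A'_def\<close>)
  qed
  have supp': "A' e = 0" if "e \<notin> S\<times>T" for e
    using that supp[rule_format, of e] D(1)[rule_format, of e] F by (simp add: A'_def)
  have rows': "(\<Sum>c\<in>T. A' (r,c)) = (\<Sum>c\<in>T. A (r,c))" if "r \<in> S" for r
    using D(3) that by (simp add: A'_def sum.distrib sum_distrib_left[symmetric])
  have cols': "(\<Sum>r\<in>S. A' (r,c)) = (\<Sum>r\<in>S. A (r,c))" if "c \<in> T" for c
    using D(4) that by (simp add: A'_def sum.distrib sum_distrib_left[symmetric])
  have cost': "(\<Sum>e\<in>S\<times>T. A' e * w e) \<le> (\<Sum>e\<in>S\<times>T. A e * w e)"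
  proof -
    have "(\<Sum>e\<in>S\<times>T. A' e * w e) = (\<Sum>e\<in>S\<times>T. A e * w e) + s * (\<Sum>e\<in>S\<times>T. D e * w e)"
      by (simp add: A'_def algebra_simps sum.distrib sum_distrib_left)
    then show ?thesis using s(1) cost by (simp add: mult_nonneg_nonpos)
  qed
  have strict': "{e\<in>S\<times>T. A' e \<notin> \<int>} \<subset> F"
    unfolding A'_def using e0 D(1) F by (intro perturbed_nonintegral_entries_psubset) (auto simp: P_def)
  show ?thesis
    by (rule that[OF nonneg' _ _ _ cost' strict']) (use supp' rows' cols' in blast)+
qed

lemma exists_integral_transport_plan:
  fixes A w :: "'a \<times> 'b \<Rightarrow> real"
  assumes fin: "finite S" "finite T"
    and "\<forall>e. A e \<ge> 0" "\<forall>e. e \<notin> S\<times>T \<longrightarrow> A e = 0"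
    and "\<forall>r\<in>S. (\<Sum>c\<in>T. A (r,c)) \<in> \<int>" "\<forall>c\<in>T. (\<Sum>r\<in>S. A (r,c)) \<in> \<int>"
  shows "\<exists>B. (\<forall>e. B e \<ge> 0) \<and> (\<forall>e. B e \<in> \<int>) \<and> (\<forall>e. e \<notin> S\<times>T \<longrightarrow> B e = 0)
     \<and> (\<forall>r\<in>S. (\<Sum>c\<in>T. B (r,c)) = (\<Sum>c\<in>T. A (r,c)))
     \<and> (\<forall>c\<in>T. (\<Sum>r\<in>S. B (r,c)) = (\<Sum>r\<in>S. A (r,c)))
     \<and> (\<Sum>e\<in>S\<times>T. B e * w e) \<le> (\<Sum>e\<in>S\<times>T. A e * w e)"
  using assms(3-)
proof (induction "card {e\<in>S\<times>T. A e \<notin> \<int>}" arbitrary: A rule: less_induct)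
  case less
  define F where "F = {e\<in>S\<times>T. A e \<notin> \<int>}"
  show ?case
  proof (cases "F = {}")
    case True
    have "\<forall>e. A e \<in> \<int>"
    proof
      fix e show "A e \<in> \<int>"
        using True less.prems(2)[rule_format, of e] unfolding F_def by (cases "e \<in> S\<times>T") auto
    qed
    with less.prems show ?thesis by (intro exI[of _ A]) auto
  next
    case False
    obtain D :: "'a \<times> 'b \<Rightarrow> real"
      where D: "\<forall>e. e \<notin> F \<longrightarrow> D e = 0" "\<exists>e\<in>F. D e \<noteq> 0"
        "\<forall>r\<in>S. (\<Sum>c\<in>T. D (r,c)) = 0" "\<forall>c\<in>T. (\<Sum>r\<in>S. D (r,c)) = 0"
      by (rule nonintegral_circulation_exists[OF fin less.prems(3,4) F_def False])
    \<comment> \<open>Of the two directions \<open>\<pm>D\<close>, one does not increase the cost.\<close>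
    define D' where "D' = (if (\<Sum>e\<in>S\<times>T. D e * w e) \<le> 0 then D else (\<lambda>e. - D e))"
    have D': "\<forall>e. e \<notin> F \<longrightarrow> D' e = 0" "\<exists>e\<in>F. D' e \<noteq> 0"
      "\<forall>r\<in>S. (\<Sum>c\<in>T. D' (r,c)) = 0" "\<forall>c\<in>T. (\<Sum>r\<in>S. D' (r,c)) = 0"
      "(\<Sum>e\<in>S\<times>T. D' e * w e) \<le> 0"
      using D by (auto simp: D'_def sum_negf)
    obtain A' where A': "\<forall>e. A' e \<ge> 0" "\<forall>e. e \<notin> S\<times>T \<longrightarrow> A' e = 0"
      "\<forall>r\<in>S. (\<Sum>c\<in>T. A' (r,c)) = (\<Sum>c\<in>T. A (r,c))"
      "\<forall>c\<in>T. (\<Sum>r\<in>S. A' (r,c)) = (\<Sum>r\<in>S. A (r,c))"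
      "(\<Sum>e\<in>S\<times>T. A' e * w e) \<le> (\<Sum>e\<in>S\<times>T. A e * w e)"
      "{e\<in>S\<times>T. A' e \<notin> \<int>} \<subset> F"
      by (rule transport_plan_fewer_nonintegral_entries[OF fin less.prems(1,2) F_def D'])
    have fewer: "card {e\<in>S\<times>T. A' e \<notin> \<int>} < card {e\<in>S\<times>T. A e \<notin> \<int>}"
      using psubset_card_mono[OF _ A'(6)] fin F_def by simp
    have "\<forall>r\<in>S. (\<Sum>c\<in>T. A' (r,c)) \<in> \<int>" "\<forall>c\<in>T. (\<Sum>r\<in>S. A' (r,c)) \<in> \<int>"
      using A'(3,4) less.prems(3,4) by simp_all
    from less.hyps[OF fewer A'(1,2) this] obtain B where B: "\<forall>e. B e \<ge> 0" "\<forall>e. B e \<in> \<int>" "\<forall>e. e \<notin> S\<times>T \<longrightarrow> B e = 0"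
      "\<forall>r\<in>S. (\<Sum>c\<in>T. B (r,c)) = (\<Sum>c\<in>T. A' (r,c))"
      "\<forall>c\<in>T. (\<Sum>r\<in>S. B (r,c)) = (\<Sum>r\<in>S. A' (r,c))"
      "(\<Sum>e\<in>S\<times>T. B e * w e) \<le> (\<Sum>e\<in>S\<times>T. A' e * w e)"
      by blast
    have "\<forall>r\<in>S. (\<Sum>c\<in>T. B (r,c)) = (\<Sum>c\<in>T. A (r,c))"
      "\<forall>c\<in>T. (\<Sum>r\<in>S. B (r,c)) = (\<Sum>r\<in>S. A (r,c))"
      "(\<Sum>e\<in>S\<times>T. B e * w e) \<le> (\<Sum>e\<in>S\<times>T. A e * w e)"
      using A'(3-5) B(4-6) by simp_all
    with B(1-3) show ?thesis by blast
  qed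
qed

section \<open>Couplings with finite support\<close>

lemma has_sum_UNIV_iff_finite_support:
  fixes f :: "'b \<Rightarrow> real"
  assumes "finite T" "\<And>y. y \<notin> T \<Longrightarrow> f y = 0"
  shows "(f has_sum s) UNIV \<longleftrightarrow> s = (\<Sum>y\<in>T. f y)"
proof -
  have "(f has_sum s) UNIV \<longleftrightarrow> (f has_sum s) T"
    by (rule has_sum_cong_neutral) (use assms in auto)
  also have "\<dots> \<longleftrightarrow> s = (\<Sum>y\<in>T. f y)" by (rule has_sum_finite_iff[OF assms(1)])
  finally show ?thesis .
qed

definition coupling_on :: "'a set \<Rightarrow> ('a \<Rightarrow> real) \<Rightarrow> ('a \<Rightarrow> real) \<Rightarrow> ('a \<times> 'a \<Rightarrow> real) \<Rightarrow> bool" where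
  "coupling_on S \<mu> \<mu>' \<xi> \<longleftrightarrow> (\<forall>p. \<xi> p \<ge> 0) \<and> (\<forall>p. p \<notin> S\<times>S \<longrightarrow> \<xi> p = 0)
     \<and> (\<forall>y\<in>S. (\<Sum>y'\<in>S. \<xi> (y,y')) = \<mu> y) \<and> (\<forall>y'\<in>S. (\<Sum>y\<in>S. \<xi> (y,y')) = \<mu>' y')"

lemma is_coupling_iff_coupling_on:
  assumes fin: "finite S" and \<mu>: "\<And>y. y \<notin> S \<Longrightarrow> \<mu> y = 0" and \<mu>': "\<And>y. y \<notin> S \<Longrightarrow> \<mu>' y = 0"
  shows "is_coupling \<mu> \<mu>' \<xi> \<longleftrightarrow> coupling_on S \<mu> \<mu>' \<xi>"
proof
  assume c: "is_coupling \<mu> \<mu>' \<xi>"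
  then have nonneg: "\<forall>p. \<xi> p \<ge> 0"
    and rows: "((\<lambda>y'. \<xi> (y, y')) has_sum \<mu> y) UNIV"
    and cols: "((\<lambda>y. \<xi> (y, y')) has_sum \<mu>' y') UNIV" for y y'
    by (simp_all add: is_coupling_def)
  have supp: "\<xi> (y,y') = 0" if "(y,y') \<notin> S\<times>S" for y y'
  proof (cases "y \<in> S")
    case False
    from rows[of y] show ?thesis
      by (rule nonneg_has_sum_le_0D) (use False \<mu> nonneg in auto)
  next
    case True
    with that have "y' \<notin> S" by simp
    from cols[of y'] show ?thesis
      by (rule nonneg_has_sum_le_0D) (use \<open>y' \<notin> S\<close> \<mu>' nonneg in auto)
  qed
  have "(\<Sum>y'\<in>S. \<xi> (y,y')) = \<mu> y" if "y \<in> S" for y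
    using rows[of y] has_sum_UNIV_iff_finite_support[OF fin, of "\<lambda>y'. \<xi> (y, y')"] supp by simp
  moreover have "(\<Sum>y\<in>S. \<xi> (y,y')) = \<mu>' y'" if "y' \<in> S" for y'
    using cols[of y'] has_sum_UNIV_iff_finite_support[OF fin, of "\<lambda>y. \<xi> (y, y')"] supp by simp
  ultimately show "coupling_on S \<mu> \<mu>' \<xi>"
    unfolding coupling_on_def using nonneg supp by auto
next
  assume "coupling_on S \<mu> \<mu>' \<xi>"
  then have nonneg: "\<forall>p. \<xi> p \<ge> 0" and supp: "\<And>y y'. (y,y') \<notin> S\<times>S \<Longrightarrow> \<xi> (y,y') = 0"
    and rows: "\<And>y. y \<in> S \<Longrightarrow> (\<Sum>y'\<in>S. \<xi> (y,y')) = \<mu> y"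
    and cols: "\<And>y'. y' \<in> S \<Longrightarrow> (\<Sum>y\<in>S. \<xi> (y,y')) = \<mu>' y'"
    unfolding coupling_on_def by blast+
  have "((\<lambda>y'. \<xi> (y, y')) has_sum \<mu> y) UNIV" for y
    using has_sum_UNIV_iff_finite_support[OF fin, of "\<lambda>y'. \<xi> (y, y')"] supp rows \<mu>
    by (cases "y \<in> S") auto
  moreover have "((\<lambda>y. \<xi> (y, y')) has_sum \<mu>' y') UNIV" for y'
    using has_sum_UNIV_iff_finite_support[OF fin, of "\<lambda>y. \<xi> (y, y')"] supp cols \<mu>'
    by (cases "y' \<in> S") auto
  ultimately show "is_coupling \<mu> \<mu>' \<xi>"
    unfolding is_coupling_def using nonneg by blast
qed

lemma coupling_cost_eq_sum:
  assumes "finite S" "coupling_on S \<mu> \<mu>' \<xi>"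
  shows "coupling_cost E \<xi> = (\<Sum>p\<in>S\<times>S. \<xi> p * gdist E (fst p) (snd p))"
  unfolding coupling_cost_def case_prod_beta
  by (rule infsumI, subst has_sum_UNIV_iff_finite_support)
     (use assms in \<open>auto simp: coupling_on_def\<close>)

lemma coupling_on_divide:
  assumes "M > 0" "\<forall>e. B e \<ge> 0" "\<forall>e. e \<notin> S\<times>S \<longrightarrow> B e = 0"
    "\<forall>r\<in>S. (\<Sum>c\<in>S. B (r,c)) = M * \<mu> r" "\<forall>c\<in>S. (\<Sum>r\<in>S. B (r,c)) = M * \<mu>' c"
  shows "coupling_on S \<mu> \<mu>' (\<lambda>p. B p / M)"
  unfolding coupling_on_def
  using assms by (simp add: sum_divide_distrib[symmetric])

section \<open>Limits of functions with discrete values on \<open>1/N\<close>\<close>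

lemma mono_bounded_int_seq_eventually_const:
  fixes a :: "nat \<Rightarrow> int"
  assumes mono: "\<And>m n. 0 < m \<Longrightarrow> m \<le> n \<Longrightarrow> a m \<le> a n" and bdd: "\<And>n. 0 < n \<Longrightarrow> a n \<le> b"
  shows "\<exists>N0>0. \<forall>n\<ge>N0. a n = a N0"
proof -
  have "a ` {0<..} \<subseteq> {a 1..b}" using mono bdd by (auto simp: Suc_le_eq)
  then have fin: "finite (a ` {0<..})" by (rule finite_subset) simp
  then have "Max (a ` {0<..}) \<in> a ` {0<..}" by (intro Max_in) auto
  then obtain N0 where N0: "N0 > 0" "a N0 = Max (a ` {0<..})" by auto
  have "a n = a N0" if "N0 \<le> n" for n
  proof -
    have "a n \<le> a N0" using N0 that fin by simp
    moreover have "a N0 \<le> a n" using mono N0(1) that .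
    ultimately show ?thesis by simp
  qed
  with N0(1) show ?thesis by blast
qed

text \<open>In fact \<open>g\<close> is constant on an interval \<open>(0, 1/N\<^sub>0)\<close>.\<close>
lemma Liminf_at_right_0_antimono_grid:
  fixes g :: "real \<Rightarrow> real"
  assumes c: "c > 0"
    and anti: "\<And>s t. 0 < s \<Longrightarrow> s \<le> t \<Longrightarrow> t \<le> 1 \<Longrightarrow> g t \<le> g s"
    and bdd: "\<And>t. 0 < t \<Longrightarrow> t \<le> 1 \<Longrightarrow> g t \<le> b"
    and grid: "\<And>N. N > 0 \<Longrightarrow> \<exists>k::int. g (1 / real N) = real_of_int k / c"
  shows "\<exists>k::int. Liminf (at_right 0) (\<lambda>t. ereal (g t)) = ereal (real_of_int k / c)"
proof -
  obtain a :: "nat \<Rightarrow> int" where a: "\<And>N. N > 0 \<Longrightarrow> g (1 / real N) = real_of_int (a N) / c"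
    using grid by metis
  have a_mono: "a m \<le> a n" if "0 < m" "m \<le> n" for m n
  proof -
    have "g (1 / real m) \<le> g (1 / real n)"
      by (rule anti) (use that in \<open>auto simp: frac_le\<close>)
    then show ?thesis using a that c by (simp add: divide_le_cancel)
  qed
  have a_bdd: "a n \<le> \<lfloor>b * c\<rfloor>" if "0 < n" for n
  proof -
    have "real_of_int (a n) / c \<le> b" using bdd[of "1 / real n"] a that by simp
    then show ?thesis using c by (simp add: le_floor_iff divide_le_eq)
  qed
  obtain N0 where N0: "N0 > 0" "\<forall>n\<ge>N0. a n = a N0"
    using mono_bounded_int_seq_eventually_const[of a, OF a_mono a_bdd] by blast
  have const: "g t = real_of_int (a N0) / c" if t: "0 < t" "t < 1 / real N0" for t
  proof -
    have "1 / real N0 \<le> 1" using N0(1) by simp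
    with t have t1: "t \<le> 1" by linarith
    define n where "n = nat \<lceil>1 / t\<rceil>"
    have "real N0 < 1 / t" using t N0 by (simp add: field_simps)
    then have n: "N0 \<le> n" "1 / t \<le> real n" unfolding n_def by linarith+
    then have "1 / real n \<le> t" using t N0 by (simp add: field_simps)
    then have "g t \<le> g (1 / real n)" using t t1 n N0 by (intro anti) auto
    moreover have "g (1 / real N0) \<le> g t" using t t1 N0 by (intro anti) auto
    moreover have "g (1 / real n) = real_of_int (a N0) / c" "g (1 / real N0) = real_of_int (a N0) / c"
      using a[of n] a[of N0] N0(1) N0(2)[rule_format, OF n(1)] n(1) by simp_all
    ultimately show ?thesis by simp
  qed
  have "eventually (\<lambda>t. ereal (g t) = ereal (real_of_int (a N0) / c)) (at_right 0)"
    using eventually_at_right_real[of 0 "1 / real N0"] N0(1)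
    by (auto elim!: eventually_mono simp: const)
  then have "((\<lambda>t. ereal (g t)) \<longlongrightarrow> ereal (real_of_int (a N0) / c)) (at_right 0)"
    by (rule tendsto_eventually)
  then show ?thesis by (intro exI[of _ "a N0"] lim_imp_Liminf) auto
qed

section \<open>Graph distance and the lazy random walk\<close>

lemma walk_len_0_iff: "walk_len E a b 0 \<longleftrightarrow> a = b"
  unfolding walk_len_def by auto

lemma walk_len_1: "E a b \<Longrightarrow> walk_len E a b 1"
  unfolding walk_len_def by (rule exI[of _ "\<lambda>i. if i = 0 then a else b"]) auto

lemma walk_len_2: "E a b \<Longrightarrow> E b c \<Longrightarrow> walk_len E a c 2"
  unfolding walk_len_def
  by (rule exI[of _ "\<lambda>i. if i = 0 then a else if i = 1 then b else c"]) (auto simp: less_2_cases_iff)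

lemma gdist_nonneg: "gdist E a b \<ge> 0"
  by (simp add: gdist_def)

lemma one_le_gdist:
  assumes "walk_len E a b n" "a \<noteq> b"
  shows "1 \<le> gdist E a b"
proof -
  have "walk_len E a b (LEAST n. walk_len E a b n)" using assms(1) by (rule LeastI)
  then have "(LEAST n. walk_len E a b n) \<noteq> 0" using assms(2) walk_len_0_iff by metis
  then show ?thesis unfolding gdist_def by simp
qed

lemma gdist_adjacent:
  assumes "E a b" "a \<noteq> b"
  shows "gdist E a b = 1"
proof -
  have "(LEAST n. walk_len E a b n) = 1"
  proof (rule Least_equality)
    show "walk_len E a b 1" using assms(1) by (rule walk_len_1)
  next
    fix m assume "walk_len E a b m"
    then show "1 \<le> m" using assms(2) walk_len_0_iff[of E a b] by (cases m) auto
  qed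
  then show ?thesis by (simp add: gdist_def)
qed

lemma lazy_rw_nonneg: "0 \<le> t \<Longrightarrow> t \<le> 1 \<Longrightarrow> lazy_rw E t z y \<ge> 0"
  by (simp add: lazy_rw_def)

lemma sum_lazy_rw:
  assumes "finite U" "z \<in> U" "nbrs E z \<subseteq> U" "finite (nbrs E z)" "deg E z > 0" "\<not> E z z"
  shows "(\<Sum>y\<in>U. lazy_rw E t z y) = 1"
proof -
  have "(\<Sum>y\<in>U. lazy_rw E t z y) = (\<Sum>y\<in>insert z (nbrs E z). lazy_rw E t z y)"
    by (rule sum.mono_neutral_right) (use assms in \<open>auto simp: lazy_rw_def nbrs_def\<close>)
  also have "\<dots> = lazy_rw E t z z + (\<Sum>y\<in>nbrs E z. lazy_rw E t z y)"
    using assms by (subst sum.insert) (auto simp: nbrs_def)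
  also have "(\<Sum>y\<in>nbrs E z. lazy_rw E t z y) = (\<Sum>y\<in>nbrs E z. t / real (deg E z))"
    by (rule sum.cong) (use assms in \<open>auto simp: lazy_rw_def nbrs_def\<close>)
  also have "\<dots> = t" using assms(5) by (simp add: deg_def)
  finally show ?thesis by (simp add: lazy_rw_def)
qed

lemma lazy_rw_mix:
  "lazy_rw E (l * t) z y = l * lazy_rw E t z y + (1 - l) * (if y = z then 1 else 0)"
  by (simp add: lazy_rw_def algebra_simps)

lemma lazy_rw_inverse_nat_scaled:
  assumes "N > 0" "deg E z > 0"
  shows "\<exists>k::nat. real N * real (deg E z) * real d * lazy_rw E (1 / real N) z y = real k"
proof (cases "y = z")
  case True
  have "real N * real (deg E z) * real d * (1 - 1 / real N) = real ((N - 1) * deg E z * d)"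
    using assms by (simp add: field_simps of_nat_diff)
  then show ?thesis using True by (intro exI[of _ "(N - 1) * deg E z * d"]) (simp add: lazy_rw_def)
next
  case False
  have "real N * real (deg E z) * real d * (1 / real N / real (deg E z)) = real d"
    using assms by (simp add: field_simps)
  then show ?thesis using False by (cases "E z y") (auto simp: lazy_rw_def intro: exI[of _ d])
qed

section \<open>Couplings of the lazy random walks at two adjacent vertices\<close>

locale adjacent_vertices =
  fixes E :: "'a \<Rightarrow> 'a \<Rightarrow> bool" and x x' :: 'a
  assumes sym: "\<And>u v. E u v \<Longrightarrow> E v u" and irrefl: "\<And>u. \<not> E u u"
    and locfin: "\<And>u. finite (nbrs E u)" and adj: "E x x'"
begin

definition nbhd :: "'a set" where
  "nbhd = {x, x'} \<union> nbrs E x \<union> nbrs E x'"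

definition cost :: "('a \<times> 'a \<Rightarrow> real) \<Rightarrow> real" where
  "cost \<xi> = (\<Sum>p\<in>nbhd \<times> nbhd. \<xi> p * gdist E (fst p) (snd p))"

abbreviation plan :: "real \<Rightarrow> ('a \<times> 'a \<Rightarrow> real) \<Rightarrow> bool" where
  "plan t \<equiv> coupling_on nbhd (lazy_rw E t x) (lazy_rw E t x')"

abbreviation W :: "real \<Rightarrow> real" where
  "W t \<equiv> W1 E (lazy_rw E t x) (lazy_rw E t x')"

lemma finite_nbhd: "finite nbhd"
  unfolding nbhd_def using locfin by simp

lemma x_neq_x': "x \<noteq> x'"
  using adj irrefl by metis

lemma gdist_x_x': "gdist E x x' = 1"
  using adj x_neq_x' by (rule gdist_adjacent)

lemma deg_pos: "z \<in> {x, x'} \<Longrightarrow> deg E z > 0"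
  using adj sym[OF adj] locfin unfolding deg_def nbrs_def by (auto simp: card_gt_0_iff)

lemma lazy_rw_outside_nbhd: "z \<in> {x, x'} \<Longrightarrow> y \<notin> nbhd \<Longrightarrow> lazy_rw E t z y = 0"
  by (auto simp: nbhd_def lazy_rw_def nbrs_def)

lemma sum_lazy_rw_nbhd: "z \<in> {x, x'} \<Longrightarrow> (\<Sum>y\<in>nbhd. lazy_rw E t z y) = 1"
  by (rule sum_lazy_rw[OF finite_nbhd]) (use deg_pos irrefl locfin in \<open>auto simp: nbhd_def\<close>)

lemma is_coupling_iff_plan: "is_coupling (lazy_rw E t x) (lazy_rw E t x') \<xi> \<longleftrightarrow> plan t \<xi>"
  by (rule is_coupling_iff_coupling_on[OF finite_nbhd]) (simp_all add: lazy_rw_outside_nbhd)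

lemma coupling_cost_plan: "plan t \<xi> \<Longrightarrow> coupling_cost E \<xi> = cost \<xi>"
  unfolding cost_def by (rule coupling_cost_eq_sum[OF finite_nbhd])

lemma W_eq_Inf_cost: "W t = Inf {cost \<xi> | \<xi>. plan t \<xi>}"
  unfolding W1_def is_coupling_iff_plan by (metis coupling_cost_plan)

lemma plan_product:
  assumes "0 \<le> t" "t \<le> 1"
  shows "plan t (\<lambda>p. lazy_rw E t x (fst p) * lazy_rw E t x' (snd p))"
  unfolding coupling_on_def
  using lazy_rw_nonneg[OF assms] lazy_rw_outside_nbhd sum_lazy_rw_nbhd
  by (auto simp: zero_le_mult_iff sum_distrib_left[symmetric] sum_distrib_right[symmetric])

lemma cost_nonneg: "plan t \<xi> \<Longrightarrow> 0 \<le> cost \<xi>"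
  unfolding cost_def coupling_on_def by (intro sum_nonneg mult_nonneg_nonneg) (auto simp: gdist_nonneg)

lemma W_le_cost: "plan t \<xi> \<Longrightarrow> W t \<le> cost \<xi>"
  unfolding W_eq_Inf_cost
  by (rule cInf_lower) (use cost_nonneg in \<open>auto intro!: bdd_belowI[of _ 0]\<close>)

lemma le_W:
  assumes "0 \<le> t" "t \<le> 1" "\<And>\<xi>. plan t \<xi> \<Longrightarrow> b \<le> cost \<xi>"
  shows "b \<le> W t"
  unfolding W_eq_Inf_cost by (rule cInf_greatest) (use plan_product[OF assms(1,2)] assms(3) in auto)


abbreviation denom :: "nat \<Rightarrow> real" where
  "denom N \<equiv> real N * real (deg E x) * real (deg E x')"

lemma denom_pos: "N > 0 \<Longrightarrow> denom N > 0"
  using deg_pos by simp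

lemma denom_mult_lazy_rw_in_Ints:
  assumes "N > 0" "z \<in> {x, x'}"
  shows "denom N * lazy_rw E (1 / real N) z y \<in> \<int>"
proof -
  have "\<exists>k::nat. denom N * lazy_rw E (1 / real N) z y = real k"
  proof (cases "z = x")
    case True
    then show ?thesis using lazy_rw_inverse_nat_scaled[OF assms(1) deg_pos[OF assms(2)], of "deg E x'"]
      by simp
  next
    case False
    then have "z = x'" using assms(2) by simp
    then show ?thesis using lazy_rw_inverse_nat_scaled[OF assms(1) deg_pos[OF assms(2)], of "deg E x"]
      by (simp add: mult_ac)
  qed
  then show ?thesis by (metis Ints_of_nat)
qed

text \<open>Scaled by \<open>denom N\<close>, a plan for \<open>t = 1/N\<close> has integral marginals.\<close>
lemma plan_round_to_grid:
  assumes N: "N > 0" and \<xi>: "plan (1 / real N) \<xi>"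
  obtains \<xi>' where "plan (1 / real N) \<xi>'" "\<forall>p. \<exists>k::nat. \<xi>' p = real k / denom N"
    "cost \<xi>' \<le> cost \<xi>"
proof -
  let ?\<mu> = "lazy_rw E (1 / real N) x" and ?\<nu> = "lazy_rw E (1 / real N) x'"
  let ?w = "\<lambda>p. gdist E (fst p) (snd p)"
  define M where "M = denom N"
  have M: "M > 0" using denom_pos[OF N] by (simp add: M_def)
  define A where "A p = M * \<xi> p" for p
  have "\<forall>e. A e \<ge> 0" "\<forall>e. e \<notin> nbhd\<times>nbhd \<longrightarrow> A e = 0"
    and rows_A: "\<forall>r\<in>nbhd. (\<Sum>c\<in>nbhd. A (r,c)) = M * ?\<mu> r"
    and cols_A: "\<forall>c\<in>nbhd. (\<Sum>r\<in>nbhd. A (r,c)) = M * ?\<nu> c"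
    using \<xi> M unfolding coupling_on_def A_def by (simp_all add: sum_distrib_left[symmetric])
  moreover have "\<forall>r\<in>nbhd. (\<Sum>c\<in>nbhd. A (r,c)) \<in> \<int>" "\<forall>c\<in>nbhd. (\<Sum>r\<in>nbhd. A (r,c)) \<in> \<int>"
    using rows_A cols_A denom_mult_lazy_rw_in_Ints[OF N] by (simp_all add: M_def)
  ultimately obtain B where B: "\<forall>e. B e \<ge> 0" "\<forall>e. B e \<in> \<int>" "\<forall>e. e \<notin> nbhd\<times>nbhd \<longrightarrow> B e = 0"
    "\<forall>r\<in>nbhd. (\<Sum>c\<in>nbhd. B (r,c)) = (\<Sum>c\<in>nbhd. A (r,c))"
    "\<forall>c\<in>nbhd. (\<Sum>r\<in>nbhd. B (r,c)) = (\<Sum>r\<in>nbhd. A (r,c))"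
    "(\<Sum>e\<in>nbhd\<times>nbhd. B e * ?w e) \<le> (\<Sum>e\<in>nbhd\<times>nbhd. A e * ?w e)"
    using exists_integral_transport_plan[OF finite_nbhd finite_nbhd, of A ?w] by blast
  show ?thesis
  proof
    show "plan (1 / real N) (\<lambda>p. B p / M)"
      using M B(1,3-5) rows_A cols_A by (intro coupling_on_divide) simp_all
    show "\<forall>p. \<exists>k::nat. B p / M = real k / denom N"
      using B(1,2) unfolding M_def by (metis Ints_nonneg_imp_of_nat)
    have "cost (\<lambda>p. B p / M) = (\<Sum>e\<in>nbhd\<times>nbhd. B e * ?w e) / M"
      unfolding cost_def by (simp add: sum_divide_distrib)
    also have "\<dots> \<le> (\<Sum>e\<in>nbhd\<times>nbhd. A e * ?w e) / M"
      using B(6) M by (simp add: divide_right_mono)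
    also have "\<dots> = cost \<xi>"
      unfolding cost_def A_def using M by (simp add: sum_divide_distrib mult.assoc)
    finally show "cost (\<lambda>p. B p / M) \<le> cost \<xi>" .
  qed
qed

lemma cost_in_grid:
  assumes "\<forall>p. \<exists>k::nat. \<xi> p = real k / M"
  shows "\<exists>n::nat. cost \<xi> = real n / M"
proof -
  obtain k where k: "\<forall>p. \<xi> p = real (k p) / M" using choice[OF assms] by blast
  define L where "L p = (LEAST n. walk_len E (fst p) (snd p) n)" for p
  have "cost \<xi> = real (\<Sum>p\<in>nbhd\<times>nbhd. k p * L p) / M"
    unfolding cost_def gdist_def L_def sum_divide_distrib of_nat_sum
    by (rule sum.cong) (use k in auto)
  then show ?thesis by blast
qed

text \<open>Grid plans have costs in \<open>(1 / denom N) \<nat>\<close>, so a cheapest one exists; by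
  rounding it is cheaper than every plan.\<close>
lemma exists_optimal_grid_plan:
  assumes N: "N > 0"
  obtains \<xi> where "plan (1 / real N) \<xi>" "\<forall>p. \<exists>k::nat. \<xi> p = real k / denom N"
    "cost \<xi> = W (1 / real N)"
proof -
  let ?t = "1 / real N"
  define M where "M = denom N"
  have M: "M > 0" using denom_pos[OF N] by (simp add: M_def)
  have t: "0 \<le> ?t" "?t \<le> 1" using N by auto
  define grid where "grid \<xi> \<longleftrightarrow> plan ?t \<xi> \<and> (\<forall>p. \<exists>k::nat. \<xi> p = real k / M)" for \<xi>
  define Ns where "Ns = {n::nat. \<exists>\<xi>. grid \<xi> \<and> cost \<xi> = real n / M}"
  have below: "\<exists>n\<in>Ns. real n / M \<le> cost \<xi>" if \<xi>: "plan ?t \<xi>" for \<xi>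
  proof -
    obtain \<xi>' where \<xi>': "grid \<xi>'" "cost \<xi>' \<le> cost \<xi>"
      using plan_round_to_grid[OF N \<xi>] unfolding grid_def M_def by blast
    then obtain n :: nat where n: "cost \<xi>' = real n / M"
      using cost_in_grid unfolding grid_def by blast
    with \<xi>'(1) have "n \<in> Ns" unfolding Ns_def by blast
    with \<xi>'(2) n show ?thesis by auto
  qed
  obtain n1 where "n1 \<in> Ns" using below[OF plan_product[OF t]] by blast
  define n0 where "n0 = (LEAST n. n \<in> Ns)"
  have "n0 \<in> Ns" unfolding n0_def using \<open>n1 \<in> Ns\<close> by (rule LeastI)
  then obtain \<xi>0 where \<xi>0: "grid \<xi>0" "cost \<xi>0 = real n0 / M" unfolding Ns_def by blast
  have "cost \<xi>0 \<le> cost \<xi>" if \<xi>: "plan ?t \<xi>" for \<xi>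
  proof -
    obtain n where n: "n \<in> Ns" "real n / M \<le> cost \<xi>" using below[OF \<xi>] by blast
    have "n0 \<le> n" unfolding n0_def using n(1) by (rule Least_le)
    then have "real n0 / M \<le> real n / M" using M by (simp add: divide_right_mono)
    then show ?thesis using n(2) \<xi>0(2) by linarith
  qed
  then have "cost \<xi>0 \<le> W ?t" using t by (rule_tac le_W) auto
  moreover have "W ?t \<le> cost \<xi>0" using \<xi>0(1) unfolding grid_def by (blast intro: W_le_cost)
  ultimately have "cost \<xi>0 = W ?t" by simp
  moreover have "plan ?t \<xi>0" "\<forall>p. \<exists>k::nat. \<xi>0 p = real k / denom N"
    using \<xi>0(1) unfolding grid_def M_def by blast+
  ultimately show ?thesis using that by blast
qed

lemma W_in_grid:
  assumes "N > 0"
  shows "\<exists>n::nat. W (1 / real N) = real n / denom N"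
proof -
  obtain \<xi> where "\<forall>p. \<exists>k::nat. \<xi> p = real k / denom N" "cost \<xi> = W (1 / real N)"
    using exists_optimal_grid_plan[OF assms] by blast
  then show ?thesis using cost_in_grid[of \<xi> "denom N"] by simp
qed

lemma one_le_gdist_from_x:
  assumes "y \<in> nbhd" "y \<noteq> x"
  shows "1 \<le> gdist E x y"
proof -
  have "y = x' \<or> E x y \<or> E x' y" using assms unfolding nbhd_def nbrs_def by blast
  then obtain n where "walk_len E x y n"
    using walk_len_1[of E x y] walk_len_1[of E x x'] walk_len_2[of E x x' y] adj by blast
  then show ?thesis by (rule one_le_gdist) (use assms(2) in simp)
qed

text \<open>Any plan moves all of the mass of \<open>x\<close> except the part staying at \<open>x\<close>,
  which is at most the mass of the second measure at \<open>x\<close>.\<close>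
lemma cost_lower_bound:
  assumes "plan t \<xi>"
  shows "1 - t - t / real (deg E x') \<le> cost \<xi>"
proof -
  have nonneg: "\<forall>p. \<xi> p \<ge> 0"
    and row_x: "(\<Sum>y'\<in>nbhd. \<xi> (x,y')) = lazy_rw E t x x"
    and col_x: "(\<Sum>y\<in>nbhd. \<xi> (y,x)) = lazy_rw E t x' x"
    using assms unfolding coupling_on_def by (auto simp: nbhd_def)
  have x: "x \<in> nbhd" by (simp add: nbhd_def)
  have "lazy_rw E t x x - \<xi> (x,x) = (\<Sum>y'\<in>nbhd - {x}. \<xi> (x,y'))"
    using sum.remove[OF finite_nbhd x, of "\<lambda>y'. \<xi> (x,y')"] row_x by simp
  also have "\<dots> \<le> (\<Sum>y'\<in>nbhd - {x}. \<xi> (x,y') * gdist E x y')"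
  proof (rule sum_mono)
    fix y' assume "y' \<in> nbhd - {x}"
    then show "\<xi> (x,y') \<le> \<xi> (x,y') * gdist E x y'"
      using mult_left_mono[OF one_le_gdist_from_x nonneg[rule_format, of "(x,y')"]] by simp
  qed
  also have "\<dots> = (\<Sum>p\<in>Pair x ` (nbhd - {x}). \<xi> p * gdist E (fst p) (snd p))"
    by (subst sum.reindex) (auto simp: inj_on_def)
  also have "\<dots> \<le> cost \<xi>"
    unfolding cost_def
    by (rule sum_mono2)
      (auto simp: finite_nbhd x intro!: mult_nonneg_nonneg gdist_nonneg nonneg[rule_format])
  finally have "lazy_rw E t x x - \<xi> (x,x) \<le> cost \<xi>" .
  moreover have "\<xi> (x,x) \<le> lazy_rw E t x' x"
    using member_le_sum[of x nbhd "\<lambda>y. \<xi> (y,x)"] finite_nbhd x nonneg col_x by simp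
  ultimately show ?thesis
    using x_neq_x' sym[OF adj] by (simp add: lazy_rw_def)
qed

lemma W_lower_bound:
  assumes "0 \<le> t" "t \<le> 1"
  shows "1 - t - t / real (deg E x') \<le> W t"
  using assms cost_lower_bound by (rule le_W)


text \<open>\<open>\<mu>\<^sup>l\<^sup>t\<close> is the mixture of \<open>\<mu>\<^sup>t\<close> and the Dirac mass at the centre with
  weights \<open>l\<close> and \<open>1 - l\<close>; so mixing a plan for \<open>t\<close> with the Dirac mass at
  \<open>(x, x')\<close> gives a plan for \<open>l t\<close>, whose cost is affine in \<open>l\<close>.\<close>
lemma plan_mix:
  assumes l: "0 \<le> l" "l \<le> 1" and \<xi>: "plan t \<xi>"
  shows "plan (l * t) (\<lambda>p. l * \<xi> p + (1 - l) * (if p = (x, x') then 1 else 0))"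
    (is "plan _ ?\<eta>")
proof -
  have nonneg: "\<forall>p. \<xi> p \<ge> 0" and supp: "\<forall>p. p \<notin> nbhd\<times>nbhd \<longrightarrow> \<xi> p = 0"
    and rows: "\<forall>y\<in>nbhd. (\<Sum>y'\<in>nbhd. \<xi> (y,y')) = lazy_rw E t x y"
    and cols: "\<forall>y'\<in>nbhd. (\<Sum>y\<in>nbhd. \<xi> (y,y')) = lazy_rw E t x' y'"
    using \<xi> unfolding coupling_on_def by blast+
  have xx': "x \<in> nbhd" "x' \<in> nbhd" by (auto simp: nbhd_def)
  have "(\<Sum>y'\<in>nbhd. ?\<eta> (y,y')) = lazy_rw E (l * t) x y" if "y \<in> nbhd" for y
  proof -
    have "(\<Sum>y'\<in>nbhd. ?\<eta> (y,y'))
        = l * (\<Sum>y'\<in>nbhd. \<xi> (y,y')) + (1 - l) * (\<Sum>y'\<in>nbhd. if (y,y') = (x,x') then 1 else 0)"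
      by (simp add: sum.distrib sum_distrib_left)
    also have "(\<Sum>y'\<in>nbhd. if (y,y') = (x,x') then 1 else (0::real)) = (if y = x then 1 else 0)"
      using finite_nbhd xx' by simp
    finally show ?thesis using rows that by (simp add: lazy_rw_mix)
  qed
  moreover have "(\<Sum>y\<in>nbhd. ?\<eta> (y,y')) = lazy_rw E (l * t) x' y'" if "y' \<in> nbhd" for y'
  proof -
    have "(\<Sum>y\<in>nbhd. ?\<eta> (y,y'))
        = l * (\<Sum>y\<in>nbhd. \<xi> (y,y')) + (1 - l) * (\<Sum>y\<in>nbhd. if (y,y') = (x,x') then 1 else 0)"
      by (simp add: sum.distrib sum_distrib_left)
    also have "(\<Sum>y\<in>nbhd. if (y,y') = (x,x') then 1 else (0::real)) = (if y' = x' then 1 else 0)"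
      using finite_nbhd xx' by simp
    finally show ?thesis using cols that by (simp add: lazy_rw_mix)
  qed
  moreover have "\<forall>p. ?\<eta> p \<ge> 0"
    using nonneg l by (auto intro!: add_nonneg_nonneg mult_nonneg_nonneg)
  moreover have "\<forall>p. p \<notin> nbhd\<times>nbhd \<longrightarrow> ?\<eta> p = 0"
    using supp xx' by auto
  ultimately show ?thesis unfolding coupling_on_def by blast
qed

lemma cost_mix:
  "cost (\<lambda>p. l * \<xi> p + (1 - l) * (if p = (x, x') then 1 else 0)) = l * cost \<xi> + (1 - l)"
proof -
  let ?g = "\<lambda>p. gdist E (fst p) (snd p)" and ?\<delta> = "\<lambda>p. if p = (x, x') then 1 else 0"
  have "cost (\<lambda>p. l * \<xi> p + (1 - l) * ?\<delta> p)
      = (\<Sum>p\<in>nbhd\<times>nbhd. l * (\<xi> p * ?g p) + (1 - l) * (?\<delta> p * ?g p))"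
    unfolding cost_def by (rule sum.cong) (simp_all add: algebra_simps)
  also have "\<dots> = l * cost \<xi> + (1 - l) * (\<Sum>p\<in>nbhd\<times>nbhd. ?\<delta> p * ?g p)"
    unfolding cost_def by (simp only: sum.distrib sum_distrib_left)
  also have "(\<Sum>p\<in>nbhd\<times>nbhd. ?\<delta> p * ?g p) = (\<Sum>p\<in>nbhd\<times>nbhd. if p = (x, x') then ?g p else 0)"
    by (rule sum.cong) auto
  also have "\<dots> = 1"
    using finite_nbhd gdist_x_x' by (subst sum.delta) (auto simp: nbhd_def)
  finally show ?thesis by simp
qed

lemma W_mix:
  assumes l: "0 < l" "l \<le> 1" and t: "0 \<le> t" "t \<le> 1"
  shows "W (l * t) \<le> l * W t + (1 - l)"
proof -
  have "(W (l * t) - (1 - l)) / l \<le> cost \<xi>" if \<xi>: "plan t \<xi>" for \<xi>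
  proof -
    have "W (l * t) \<le> cost (\<lambda>p. l * \<xi> p + (1 - l) * (if p = (x, x') then 1 else 0))"
      using plan_mix[OF _ l(2) \<xi>] l(1) by (intro W_le_cost) simp
    also have "\<dots> = l * cost \<xi> + (1 - l)" by (rule cost_mix)
    finally show ?thesis using l(1) by (simp add: pos_divide_le_eq mult.commute)
  qed
  then have "(W (l * t) - (1 - l)) / l \<le> W t"
    using t by (intro le_W) auto
  then show ?thesis using l(1) by (simp add: pos_divide_le_eq mult.commute)
qed

lemma kappa_eq_1_minus_W: "kappa E t x x' = 1 - W t"
  unfolding kappa_def gdist_x_x' by simp

lemma kappa_div_antimono:
  assumes "0 < s" "s \<le> t" "t \<le> 1"
  shows "kappa E t x x' / t \<le> kappa E s x x' / s"
proof -
  define l where "l = s / t"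
  have l: "0 < l" "l \<le> 1" and s: "s = l * t" using assms by (auto simp: l_def)
  have "l * (1 - W t) \<le> 1 - W s"
    using W_mix[OF l, of t] assms s by (simp add: algebra_simps)
  then have "l * (1 - W t) / s \<le> (1 - W s) / s"
    using assms(1) by (simp add: divide_right_mono)
  moreover have "l * (1 - W t) / s = (1 - W t) / t"
    using l(1) s by simp
  ultimately show ?thesis by (simp add: kappa_eq_1_minus_W)
qed

lemma kappa_div_upper_bound:
  assumes "0 < t" "t \<le> 1"
  shows "kappa E t x x' / t \<le> 1 + 1 / real (deg E x')"
proof -
  have "1 - W t \<le> t * (1 + 1 / real (deg E x'))"
    using W_lower_bound[of t] assms by (simp add: algebra_simps)
  then show ?thesis using assms by (simp add: kappa_eq_1_minus_W divide_le_eq mult.commute)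
qed

lemma kappa_div_in_grid:
  assumes N: "N > 0"
  shows "\<exists>k::int. kappa E (1 / real N) x x' / (1 / real N) = real_of_int k / (real (deg E x) * real (deg E x'))"
proof -
  obtain n :: nat where n: "W (1 / real N) = real n / denom N"
    using W_in_grid[OF N] by blast
  have "real (deg E x) > 0" "real (deg E x') > 0" using deg_pos by auto
  then have "kappa E (1 / real N) x x' / (1 / real N)
      = real_of_int (int N * int (deg E x) * int (deg E x') - int n) / (real (deg E x) * real (deg E x'))"
    using N n by (simp add: kappa_eq_1_minus_W field_simps)
  then show ?thesis by blast
qed

lemma ric_in_grid:
  "\<exists>k::int. ric E x x' = ereal (real_of_int k / (real (deg E x) * real (deg E x')))"
  unfolding ric_def
proof (rule Liminf_at_right_0_antimono_grid)
  show "real (deg E x) * real (deg E x') > 0" using deg_pos by simp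
qed (fact kappa_div_antimono kappa_div_upper_bound kappa_div_in_grid)+

end

theorem theorem1:
  fixes E :: "'a \<Rightarrow> 'a \<Rightarrow> bool" and x x' :: 'a and N :: nat and t :: real
  assumes sym: "\<And>u v. E u v \<Longrightarrow> E v u"
    and irrefl: "\<And>u. \<not> E u u"
    and locfin: "\<And>u. finite (nbrs E u)"
    and adj: "E x x'"
    and N: "N > 0"
    and t: "t = 1 / real N"
  shows "(\<exists>\<xi>. optimal_coupling E (lazy_rw E t x) (lazy_rw E t x') \<xi> \<and>
            (\<forall>p. \<exists>k::nat. \<xi> p = real k / (real N * real (deg E x) * real (deg E x'))))
       \<and> (\<exists>k::int. kappa E 1 x x' = real_of_int k / (real (deg E x) * real (deg E x')))
       \<and> (\<exists>k::int. ric E x x' = ereal (real_of_int k / (real (deg E x) * real (deg E x'))))"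
proof -
  interpret adjacent_vertices E x x'
    using sym irrefl locfin adj by unfold_locales
  obtain \<xi> where \<xi>: "plan t \<xi>" "\<forall>p. \<exists>k::nat. \<xi> p = real k / denom N" "cost \<xi> = W t"
    using exists_optimal_grid_plan[OF N] unfolding t by blast
  then have "optimal_coupling E (lazy_rw E t x) (lazy_rw E t x') \<xi>"
    unfolding optimal_coupling_def by (simp add: is_coupling_iff_plan coupling_cost_plan)
  moreover have "\<exists>k::int. kappa E 1 x x' = real_of_int k / (real (deg E x) * real (deg E x'))"
    using kappa_div_in_grid[of 1] by simp
  ultimately show ?thesis using \<xi>(2) ric_in_grid by blast
qed

end
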